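(* Let $G$ be a finite non-singular graph. Then $\mathcal{A}_{RW}(G)\cong\mathcal{A}(G)$ (as algebras) if and only if $G$ is a regular graph or a biregular graph. Moreover, if $\mathcal{A}_{RW}(G)\not\cong\mathcal{A}(G)$, then the only algebra homomorphism between them is the null map.
   Context: Graphs are simple (no loops or multiple edges) and connected; here $G=(V,E)$ has finitely many vertices $V=\{1,\dots,n\}$. The adjacency matrix is $A=(a_{ij})$ with $a_{ij}=1$ if $i,j$ are neighbors and $0$ otherwise; $G$ is non-singular if $\det A\neq 0$. $\deg(i)$ is the number of neighbors of $i$. $G$ is $d$-regular if every vertex has degree $d$, and regular if it is $d$-regular for some $d$. $G$ is bipartite if $V$ splits into disjoint $V_1,V_2$ with every edge joining $V_1$ to $V_2$; $G$ is biregular if it is bipartite with such a bipartition in which any two vertices on the same side have the same degree. An evolution algebra over $\mathbb{R}$ is an algebra with a basis $\{e_i\}$ (natural basis) such that $e_i\cdot e_j=0$ for $i\ne j$ and $e_i\cdot e_i=\sum_k c_{ik}e_k$. $\mathcal{A}(G)$ has natural basis $\{e_i:i\in V\}$ with $e_i\cdot e_i=\sum_{k\in V}a_{ik}e_k$; $\mathcal{A}_{RW}(G)$ has natural basis $\{e_i:i\in V\}$ with $e_i\cdot e_i=\sum_{k\in V}\frac{a_{ik}}{\deg(i)}e_k$; in both, $e_i\cdot e_j=0$ for $i\neq j$. An isomorphism is a bijective linear map $f$ with $f(u\cdot v)=f(u)\cdot f(v)$. *)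

theory Defs
  imports "HOL-Analysis.Analysis"
begin

definition simple_graph :: "('v::finite \<Rightarrow> 'v \<Rightarrow> bool) \<Rightarrow> bool" where
  "simple_graph E \<longleftrightarrow> (\<forall>i j. E i j \<longleftrightarrow> E j i) \<and> (\<forall>i. \<not> E i i)"

definition connected_graph :: "('v::finite \<Rightarrow> 'v \<Rightarrow> bool) \<Rightarrow> bool" where
  "connected_graph E \<longleftrightarrow> (\<forall>x y. E\<^sup>*\<^sup>* x y)"

definition adj :: "('v::finite \<Rightarrow> 'v \<Rightarrow> bool) \<Rightarrow> 'v \<Rightarrow> 'v \<Rightarrow> real" where
  "adj E i j = (if E i j then 1 else 0)"

definition adj_matrix :: "('v::finite \<Rightarrow> 'v \<Rightarrow> bool) \<Rightarrow> real^'v^'v" where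
  "adj_matrix E = (\<chi> i j. adj E i j)"

definition nonsingular_graph :: "('v::finite \<Rightarrow> 'v \<Rightarrow> bool) \<Rightarrow> bool" where
  "nonsingular_graph E \<longleftrightarrow> det (adj_matrix E) \<noteq> 0"

definition deg :: "('v::finite \<Rightarrow> 'v \<Rightarrow> bool) \<Rightarrow> 'v \<Rightarrow> nat" where
  "deg E i = card {j. E i j}"

definition regular_graph :: "('v::finite \<Rightarrow> 'v \<Rightarrow> bool) \<Rightarrow> bool" where
  "regular_graph E \<longleftrightarrow> (\<exists>d. \<forall>i. deg E i = d)"

definition bipartition :: "('v::finite \<Rightarrow> 'v \<Rightarrow> bool) \<Rightarrow> 'v set \<Rightarrow> 'v set \<Rightarrow> bool" where
  "bipartition E V1 V2 \<longleftrightarrow> V1 \<inter> V2 = {} \<and> V1 \<union> V2 = UNIV \<and>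
     (\<forall>i j. E i j \<longrightarrow> (i \<in> V1 \<and> j \<in> V2) \<or> (i \<in> V2 \<and> j \<in> V1))"

definition biregular_graph :: "('v::finite \<Rightarrow> 'v \<Rightarrow> bool) \<Rightarrow> bool" where
  "biregular_graph E \<longleftrightarrow> (\<exists>V1 V2. bipartition E V1 V2 \<and>
     (\<forall>i\<in>V1. \<forall>j\<in>V1. deg E i = deg E j) \<and> (\<forall>i\<in>V2. \<forall>j\<in>V2. deg E i = deg E j))"

text \<open>Evolution algebra on real^'v with natural basis the standard basis and structure
  constants C: e_i e_i = sum_k C i k e_k, e_i e_j = 0 for i \<noteq> j.\<close>

definition evo_mult :: "('v::finite \<Rightarrow> 'v \<Rightarrow> real) \<Rightarrow> real^'v \<Rightarrow> real^'v \<Rightarrow> real^'v" where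
  "evo_mult C u w = (\<chi> k. \<Sum>i\<in>UNIV. u$i * w$i * C i k)"

text \<open>Structure constants of A(G) and of A_RW(G).\<close>

definition rw_coeffs :: "('v::finite \<Rightarrow> 'v \<Rightarrow> bool) \<Rightarrow> 'v \<Rightarrow> 'v \<Rightarrow> real" where
  "rw_coeffs E i k = adj E i k / real (deg E i)"

definition evo_hom :: "('v::finite \<Rightarrow> 'v \<Rightarrow> real) \<Rightarrow> ('v \<Rightarrow> 'v \<Rightarrow> real) \<Rightarrow> (real^'v \<Rightarrow> real^'v) \<Rightarrow> bool" where
  "evo_hom C1 C2 f \<longleftrightarrow> linear f \<and> (\<forall>u w. f (evo_mult C1 u w) = evo_mult C2 (f u) (f w))"

definition evo_isomorphic :: "('v::finite \<Rightarrow> 'v \<Rightarrow> real) \<Rightarrow> ('v \<Rightarrow> 'v \<Rightarrow> real) \<Rightarrow> bool" where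
  "evo_isomorphic C1 C2 \<longleftrightarrow> (\<exists>f. evo_hom C1 C2 f \<and> bij f)"

end

theory Submission
  imports Defs
begin

text \<open>Let f be a nonzero homomorphism between evolution algebras with structure matrices C1 and C2,
  where the rows of C2 are linearly independent and the nonzero pattern of C1 is a connected graph.
  Products of distinct basis vectors vanish, so the images of distinct basis vectors have disjoint
  supports; connectivity forces every image to be nonzero, hence f e_i = c_i e_(\<sigma> i) for a
  permutation \<sigma>, and comparing f (e_i e_i) with (f e_i)^2 gives C1 i k c_k = c_i^2 C2 (\<sigma> i) (\<sigma> k).
  Between A_RW(G) and A(G) this says c_k = d_i c_i^2 (resp. c_k = c_i^2 / d_i) along every edge i k,
  which forces all neighbours of a vertex to have the same degree; for connected G this means
  G is regular or biregular. Conversely, for such G a diagonal scaling by suitable cube roots of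
  degrees is an isomorphism.\<close>

definition rows_independent :: "('v::finite \<Rightarrow> 'v \<Rightarrow> real) \<Rightarrow> bool" where
  "rows_independent C \<longleftrightarrow> (\<forall>w. (\<forall>k. (\<Sum>m\<in>UNIV. w m * C m k) = 0) \<longrightarrow> w = (\<lambda>_. 0))"

lemma rows_independentD:
  "rows_independent C \<Longrightarrow> (\<And>k. (\<Sum>m\<in>UNIV. w m * C m k) = 0) \<Longrightarrow> w m = 0"
  by (auto simp: rows_independent_def fun_eq_iff)

lemma rows_independent_adj:
  fixes E :: "'v::finite \<Rightarrow> 'v \<Rightarrow> bool"
  assumes "nonsingular_graph E"
  shows "rows_independent (adj E)"
  unfolding rows_independent_def
proof (intro allI impI)
  fix w :: "_ \<Rightarrow> real"
  assume "\<forall>k. (\<Sum>m\<in>UNIV. w m * adj E m k) = 0"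
  then have "transpose (adj_matrix E) *v (\<chi> m. w m) = 0"
    by (simp add: vector_matrix_mult_def adj_matrix_def vec_eq_iff mult.commute)
  moreover have "invertible (transpose (adj_matrix E))"
    using assms by (simp add: nonsingular_graph_def invertible_det_nz)
  ultimately have "(\<chi> m. w m) = (0::real^'v)"
    using matrix_left_invertible_ker by (metis invertible_def)
  then show "w = (\<lambda>_. 0)"
    by (simp add: vec_eq_iff fun_eq_iff)
qed

lemma rows_independent_row_nonzero:
  assumes "rows_independent C"
  shows "\<exists>k. C i k \<noteq> 0"
proof (rule ccontr)
  assume "\<nexists>k. C i k \<noteq> 0"
  then have "(\<Sum>m\<in>UNIV. (if m = i then 1 else 0) * C m k) = 0" for k
    by (simp add: if_distrib[of "\<lambda>x. x * _"] cong: if_cong)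
  then show False
    using rows_independentD[OF assms, of "\<lambda>m. if m = i then 1 else 0" i] by simp
qed

lemma rows_independent_divide_rows:
  assumes "rows_independent C" and "\<And>i. r i \<noteq> 0"
  shows "rows_independent (\<lambda>i k. C i k / r i)"
  unfolding rows_independent_def
proof (intro allI impI)
  fix w :: "_ \<Rightarrow> real"
  assume "\<forall>k. (\<Sum>m\<in>UNIV. w m * (C m k / r m)) = 0"
  then have "w m / r m = 0" for m
    using rows_independentD[OF assms(1), of "\<lambda>m. w m / r m"] by simp
  then show "w = (\<lambda>_. 0)"
    using assms(2) by (simp add: fun_eq_iff)
qed

lemma deg_pos:
  assumes "nonsingular_graph E"
  shows "0 < deg E i"
proof -
  obtain k where "adj E i k \<noteq> 0"
    using rows_independent_row_nonzero[OF rows_independent_adj[OF assms]] by blast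
  then have "k \<in> {j. E i j}"
    by (simp add: adj_def split: if_splits)
  then show ?thesis
    unfolding deg_def by (auto simp: card_gt_0_iff)
qed

lemma rows_independent_rw_coeffs:
  assumes "nonsingular_graph E"
  shows "rows_independent (rw_coeffs E)"
proof -
  have "rw_coeffs E = (\<lambda>i k. adj E i k / real (deg E i))"
    by (simp add: fun_eq_iff rw_coeffs_def)
  moreover have "real (deg E i) \<noteq> 0" for i
    using deg_pos[OF assms, of i] by simp
  ultimately show ?thesis
    using rows_independent_divide_rows[OF rows_independent_adj[OF assms]] by simp
qed

lemma simple_graph_sym:
  "simple_graph E \<Longrightarrow> E i j \<Longrightarrow> E j i"
  by (simp add: simple_graph_def)

lemma connected_graph_mono:
  assumes "connected_graph E" and "\<And>i k. E i k \<Longrightarrow> E' i k"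
  shows "connected_graph E'"
  using assms mono_rtranclp[of E E'] unfolding connected_graph_def by blast

lemma evo_mult_axis:
  "evo_mult C (axis i 1) (axis j 1) = (if i = j then (\<chi> k. C i k) else 0)"
proof -
  have "axis i 1 $ m * axis j 1 $ m * C m k = (if m = i then (if i = j then C i k else 0) else 0)"
    for m k
    by (simp add: axis_def)
  then show ?thesis
    by (simp add: evo_mult_def vec_eq_iff)
qed

lemma linear_component_expansion:
  fixes f :: "real^'m::finite \<Rightarrow> real^'n::finite"
  assumes "linear f"
  shows "f x $ j = (\<Sum>i\<in>UNIV. x $ i * f (axis i 1) $ j)"
  using assms by (simp add: Cartesian_Space.linear_componentwise linear_def scalar_mult_eq_scaleR)

lemma evo_homD:
  assumes "evo_hom C1 C2 f"
  shows "linear f" and "f (evo_mult C1 u w) = evo_mult C2 (f u) (f w)"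
  using assms by (simp_all add: evo_hom_def)

lemma evo_hom_square_axis:
  assumes "evo_hom C1 C2 f"
  shows "(\<Sum>k\<in>UNIV. C1 i k * f (axis k 1) $ m) = (\<Sum>j\<in>UNIV. (f (axis i 1) $ j)\<^sup>2 * C2 j m)"
proof -
  have "f (\<chi> k. C1 i k) = evo_mult C2 (f (axis i 1)) (f (axis i 1))"
    using evo_homD(2)[OF assms, of "axis i 1" "axis i 1"] by (simp add: evo_mult_axis)
  then show ?thesis
    using linear_component_expansion[OF evo_homD(1)[OF assms], of "\<chi> k. C1 i k" m]
    by (simp add: evo_mult_def power2_eq_square vec_eq_iff)
qed

lemma evo_hom_axis_disjoint:
  assumes "evo_hom C1 C2 f" and "rows_independent C2" and "i \<noteq> j"
  shows "f (axis i 1) $ m * f (axis j 1) $ m = 0"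
proof -
  have "evo_mult C2 (f (axis i 1)) (f (axis j 1)) = f 0"
    using evo_homD(2)[OF assms(1), of "axis i 1" "axis j 1"] assms(3) by (simp add: evo_mult_axis)
  also have "\<dots> = 0"
    using evo_homD(1)[OF assms(1)] by (rule linear_0)
  finally have "(\<Sum>m\<in>UNIV. f (axis i 1) $ m * f (axis j 1) $ m * C2 m k) = 0" for k
    by (simp add: evo_mult_def vec_eq_iff)
  then show ?thesis
    using rows_independentD[OF assms(2), of "\<lambda>m. f (axis i 1) $ m * f (axis j 1) $ m"] by simp
qed

text \<open>If e_i is killed, so is every e_k with C1 i k \<noteq> 0: multiplying the k-th coordinate
  of f (e_i e_i) = 0 by f(e_k) isolates the term C1 i k f(e_k)^2, since the images of distinct
  basis vectors have disjoint supports. Connectivity then kills the whole basis.\<close>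

lemma evo_hom_axis_nonzero:
  assumes conn: "connected_graph (\<lambda>i k. C1 i k \<noteq> 0)" and ind: "rows_independent C2"
    and hom: "evo_hom C1 C2 f" and nz: "f \<noteq> (\<lambda>_. 0)"
  shows "f (axis i 1) \<noteq> 0"
proof
  define v where "v i = f (axis i 1)" for i
  have spread: "v k = 0" if "v i = 0" and "C1 i k \<noteq> 0" for i k
  proof -
    have "C1 i k * (v k $ m)\<^sup>2 = 0" for m
    proof -
      have "(\<Sum>j\<in>UNIV. C1 i j * v j $ m) = 0"
        using evo_hom_square_axis[OF hom, of i m] that(1) by (simp add: v_def)
      then have "(\<Sum>j\<in>UNIV. C1 i j * v j $ m * v k $ m) = 0"
        by (simp flip: sum_distrib_right)
      moreover have "C1 i j * v j $ m * v k $ m = (if j = k then C1 i k * (v k $ m)\<^sup>2 else 0)" for j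
        using evo_hom_axis_disjoint[OF hom ind, of j k m] by (simp add: v_def power2_eq_square)
      ultimately show ?thesis by simp
    qed
    then show ?thesis
      using that(2) by (simp add: vec_eq_iff)
  qed
  assume "f (axis i 1) = 0"
  have "v k = 0" for k
  proof -
    have "(\<lambda>i k. C1 i k \<noteq> 0)\<^sup>*\<^sup>* i k"
      using conn by (simp add: connected_graph_def)
    then show ?thesis
      by induction (use \<open>f (axis i 1) = 0\<close> spread in \<open>auto simp: v_def\<close>)
  qed
  then have "f x = 0" for x
    using linear_component_expansion[OF evo_homD(1)[OF hom], of x] by (simp add: vec_eq_iff v_def)
  with nz show False by auto
qed

lemma disjoint_supports_scaled_permutation:
  fixes v :: "'n::finite \<Rightarrow> real^'n"
  assumes nz: "\<And>i. v i \<noteq> 0" and disj: "\<And>i j m. i \<noteq> j \<Longrightarrow> v i $ m * v j $ m = 0"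
  obtains \<sigma> c where "bij \<sigma>" and "\<And>i. c i \<noteq> 0" and "\<And>i. v i = c i *\<^sub>R axis (\<sigma> i) 1"
proof -
  have "\<forall>i. \<exists>m. v i $ m \<noteq> 0"
    using nz by (metis vec_eq_iff zero_index)
  then obtain \<sigma> where \<sigma>: "\<And>i. v i $ \<sigma> i \<noteq> 0"
    by metis
  have "inj \<sigma>"
    by (rule injI) (metis disj \<sigma> mult_eq_0_iff)
  then have bij: "bij \<sigma>"
    by (simp add: bij_def finite_UNIV_inj_surj)
  have "v i $ m = 0" if "m \<noteq> \<sigma> i" for i m
  proof -
    obtain j where "m = \<sigma> j"
      using bij by (auto simp: bij_def)
    then show ?thesis
      using disj[of i j m] \<sigma>[of j] that by auto
  qed
  then have "v i = v i $ \<sigma> i *\<^sub>R axis (\<sigma> i) 1" for i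
    by (auto simp: vec_eq_iff axis_def)
  with \<sigma> show ?thesis
    using that[OF bij, of "\<lambda>i. v i $ \<sigma> i"] by blast
qed

lemma evo_hom_scaled_permutation:
  assumes conn: "connected_graph (\<lambda>i k. C1 i k \<noteq> 0)" and ind: "rows_independent C2"
    and hom: "evo_hom C1 C2 f" and nz: "f \<noteq> (\<lambda>_. 0)"
  obtains \<sigma> c where "bij \<sigma>" and "\<And>i. c i \<noteq> 0"
    and "\<And>i k. C1 i k * c k = (c i)\<^sup>2 * C2 (\<sigma> i) (\<sigma> k)"
proof -
  obtain \<sigma> c where bij: "bij \<sigma>" and c: "\<And>i. c i \<noteq> 0"
    and v: "\<And>i. f (axis i 1) = c i *\<^sub>R axis (\<sigma> i) 1"
    using disjoint_supports_scaled_permutation[of "\<lambda>i. f (axis i 1)"]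
      evo_hom_axis_nonzero[OF conn ind hom nz] evo_hom_axis_disjoint[OF hom ind] by blast
  have inj: "\<sigma> i = \<sigma> k \<longleftrightarrow> i = k" for i k
    using bij by (simp add: bij_def inj_eq)
  have lhs: "C1 i j * f (axis j 1) $ \<sigma> k = (if j = k then C1 i k * c k else 0)" for i j k
    unfolding v by (simp add: axis_def inj)
  have rhs: "(f (axis i 1) $ j)\<^sup>2 * C2 j m = (if j = \<sigma> i then (c i)\<^sup>2 * C2 (\<sigma> i) m else 0)"
    for i j m
    unfolding v by (simp add: axis_def)
  have "C1 i k * c k = (c i)\<^sup>2 * C2 (\<sigma> i) (\<sigma> k)" for i k
    using evo_hom_square_axis[OF hom, of i "\<sigma> k"] by (simp only: lhs rhs sum.delta finite UNIV_I if_True)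
  with bij c show ?thesis
    using that by blast
qed

lemma evo_isomorphic_if_diagonal_scaling:
  fixes C1 C2 :: "'v::finite \<Rightarrow> 'v \<Rightarrow> real"
  assumes c: "\<And>i. c i \<noteq> 0" and scal: "\<And>i k. C1 i k * c k = (c i)\<^sup>2 * C2 i k"
  shows "evo_isomorphic C1 C2"
proof -
  define f :: "real^'v \<Rightarrow> real^'v" where "f x = (\<chi> i. c i * x $ i)" for x
  have "linear f"
    by (rule linearI) (simp_all add: f_def vec_eq_iff algebra_simps)
  moreover have "bij f"
    by (rule o_bij[where g = "\<lambda>x. \<chi> i. x $ i / c i"]) (simp_all add: fun_eq_iff f_def vec_eq_iff c)
  moreover have "f (evo_mult C1 u w) = evo_mult C2 (f u) (f w)" for u w
  proof -
    have "c k * (\<Sum>i\<in>UNIV. u $ i * w $ i * C1 i k) = (\<Sum>i\<in>UNIV. c i * u $ i * (c i * w $ i) * C2 i k)"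
      for k
      unfolding sum_distrib_left
    proof (intro sum.cong refl)
      fix i
      have "c k * (u $ i * w $ i * C1 i k) = u $ i * w $ i * (C1 i k * c k)"
        by (simp only: ac_simps)
      also have "\<dots> = c i * u $ i * (c i * w $ i) * C2 i k"
        by (simp add: scal power2_eq_square)
      finally show "c k * (u $ i * w $ i * C1 i k) = c i * u $ i * (c i * w $ i) * C2 i k" .
    qed
    then show ?thesis
      by (simp add: f_def evo_mult_def vec_eq_iff)
  qed
  ultimately show ?thesis
    unfolding evo_isomorphic_def evo_hom_def by blast
qed

definition neighbour_degrees_uniform :: "('v::finite \<Rightarrow> 'v \<Rightarrow> bool) \<Rightarrow> bool" where
  "neighbour_degrees_uniform E \<longleftrightarrow> (\<forall>i j k. E i j \<longrightarrow> E i k \<longrightarrow> deg E j = deg E k)"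

lemma neighbour_degrees_uniform_if_regular_or_biregular:
  assumes "regular_graph E \<or> biregular_graph E"
  shows "neighbour_degrees_uniform E"
  using assms
proof
  assume "regular_graph E"
  then show ?thesis
    by (auto simp: regular_graph_def neighbour_degrees_uniform_def)
next
  assume "biregular_graph E"
  then obtain V1 V2 where bip: "bipartition E V1 V2"
    and "\<forall>i\<in>V1. \<forall>j\<in>V1. deg E i = deg E j" and "\<forall>i\<in>V2. \<forall>j\<in>V2. deg E i = deg E j"
    unfolding biregular_graph_def by blast
  moreover have "j \<in> V1 \<and> k \<in> V1 \<or> j \<in> V2 \<and> k \<in> V2" if "E i j" and "E i k" for i j k
    using bip that unfolding bipartition_def by blast
  ultimately show ?thesis
    unfolding neighbour_degrees_uniform_def by blast
qed

lemma regular_or_biregular_if_neighbour_degrees_uniform: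
  assumes sym: "\<And>i j. E i j \<Longrightarrow> E j i" and conn: "connected_graph E"
    and unif: "neighbour_degrees_uniform E"
  shows "regular_graph E \<or> biregular_graph E"
proof (cases "\<exists>r s. E r s")
  case False
  then show ?thesis
    by (simp add: regular_graph_def deg_def)
next
  case True
  then obtain r s where rs: "E r s" by blast
  define a where "a = deg E r"
  define b where "b = deg E s"
  have alternating: "(deg E x = a \<and> (\<forall>z. E x z \<longrightarrow> deg E z = b)) \<or>
      (deg E x = b \<and> (\<forall>z. E x z \<longrightarrow> deg E z = a))" for x
  proof -
    have "E\<^sup>*\<^sup>* r x"
      using conn by (simp add: connected_graph_def)
    then show ?thesis
    proof induction
      case base
      then show ?case
        using unif rs unfolding neighbour_degrees_uniform_def a_def b_def by blast
    next
      case (step y z)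
      have "deg E w = deg E y" if "E z w" for w
        using unif sym[OF step(2)] that unfolding neighbour_degrees_uniform_def by blast
      then show ?case
        using step(2,3) by auto
    qed
  qed
  show ?thesis
  proof (cases "a = b")
    case True
    then show ?thesis
      using alternating unfolding regular_graph_def by metis
  next
    case False
    then have "bipartition E {x. deg E x = a} {x. deg E x = b}"
      using alternating unfolding bipartition_def by auto
    then show ?thesis
      unfolding biregular_graph_def by force
  qed
qed

lemma neighbour_degrees_uniform_if_scaling:
  fixes g :: "nat \<Rightarrow> real"
  assumes sym: "\<And>i j. E i j \<Longrightarrow> E j i" and "inj g" and c: "\<And>i. c i \<noteq> 0"
    and scal: "\<And>i k. E i k \<Longrightarrow> c k = g (deg E i) * (c i)\<^sup>2"
  shows "neighbour_degrees_uniform E"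
  unfolding neighbour_degrees_uniform_def
proof (intro allI impI)
  fix i j k
  assume ij: "E i j" and ik: "E i k"
  have "c j = c k"
    using scal[OF ij] scal[OF ik] by simp
  moreover have "g (deg E j) * (c j)\<^sup>2 = g (deg E k) * (c k)\<^sup>2"
    using scal[OF sym[OF ij]] scal[OF sym[OF ik]] by simp
  ultimately have "g (deg E j) = g (deg E k)"
    using c[of j] by simp
  then show "deg E j = deg E k"
    by (rule injD[OF \<open>inj g\<close>])
qed

lemma deg_eq_if_bij_preserves_edges:
  assumes "bij \<sigma>" and edges: "\<And>i k. E i k \<Longrightarrow> E (\<sigma> i) (\<sigma> k)"
  shows "deg E (\<sigma> i) = deg E i"
proof -
  have le: "deg E i \<le> deg E (\<sigma> i)" for i
    unfolding deg_def
  proof (rule card_inj_on_le)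
    show "inj_on \<sigma> {j. E i j}"
      using \<open>bij \<sigma>\<close> by (simp add: bij_def inj_on_def)
    show "\<sigma> ` {j. E i j} \<subseteq> {j. E (\<sigma> i) j}"
      using edges by auto
  qed simp
  have "(\<Sum>i\<in>UNIV. deg E i) = (\<Sum>i\<in>UNIV. deg E (\<sigma> i))"
    using sum.reindex_bij_betw[of \<sigma> UNIV UNIV "deg E"] \<open>bij \<sigma>\<close> by simp
  then show ?thesis
    using sum_mono_inv[of "deg E" UNIV "\<lambda>i. deg E (\<sigma> i)"] le by (metis UNIV_I finite)
qed

lemma powr_cube_root_identity:
  fixes a b :: real
  assumes "0 < a" and "0 < b"
  shows "(a powr (-2/3) * b powr (-1/3))\<^sup>2 * a = b powr (-2/3) * a powr (-1/3)"
proof -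
  have "(a powr (-2/3) * b powr (-1/3))\<^sup>2 * a = (a * (a powr (-2/3))\<^sup>2) * (b powr (-1/3))\<^sup>2"
    by (simp add: power_mult_distrib)
  also have "\<dots> = a powr (-1/3) * b powr (-2/3)"
    using assms by (simp add: powr_power powr_mult_base)
  finally show ?thesis
    by simp
qed

text \<open>The scaling: with d i the degree of i and e i the common degree of its neighbours,
  c i = d i ^ (-2/3) * e i ^ (-1/3) satisfies c k = d i * c i ^ 2 along every edge i k,
  because then d k = e i and e k = d i.\<close>

lemma evo_isomorphic_rw_adj_if_neighbour_degrees_uniform:
  assumes sym: "\<And>i j. E i j \<Longrightarrow> E j i" and dpos: "\<And>i. 0 < deg E i"
    and unif: "neighbour_degrees_uniform E"
  shows "evo_isomorphic (rw_coeffs E) (adj E)"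
proof -
  define d where "d i = real (deg E i)" for i
  define e where "e i = d (SOME k. E i k)" for i
  define c where "c i = d i powr (-2/3) * e i powr (-1/3)" for i
  have d: "0 < d i" for i
    using dpos[of i] by (simp add: d_def)
  have e: "e i = d k" if "E i k" for i k
  proof -
    have "E i (SOME k. E i k)"
      using that by (rule someI)
    then show ?thesis
      using unif that unfolding neighbour_degrees_uniform_def e_def d_def by metis
  qed
  have "c k = (c i)\<^sup>2 * d i" if "E i k" for i k
    using powr_cube_root_identity[OF d[of i] d[of k]] e[OF that] e[OF sym[OF that]]
    by (simp add: c_def)
  then have "rw_coeffs E i k * c k = (c i)\<^sup>2 * adj E i k" for i k
    using d[of i] by (simp add: rw_coeffs_def adj_def d_def)
  moreover have "c i \<noteq> 0" for i
    using d[of i] d[of "SOME k. E i k"] by (simp add: c_def e_def)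
  ultimately show ?thesis
    by (intro evo_isomorphic_if_diagonal_scaling)
qed

lemma neighbour_degrees_uniform_if_evo_hom_rw_adj:
  assumes sg: "simple_graph E" and conn: "connected_graph E" and ns: "nonsingular_graph E"
    and hom: "evo_hom (rw_coeffs E) (adj E) f" and nz: "f \<noteq> (\<lambda>_. 0)"
  shows "neighbour_degrees_uniform E"
proof -
  have d: "0 < real (deg E i)" for i
    using deg_pos[OF ns] by simp
  have conn': "connected_graph (\<lambda>i k. rw_coeffs E i k \<noteq> 0)"
    using conn by (rule connected_graph_mono) (simp add: rw_coeffs_def adj_def deg_pos[OF ns])
  obtain \<sigma> c where "bij \<sigma>" and c: "\<And>i. c i \<noteq> 0"
    and eq: "\<And>i k. rw_coeffs E i k * c k = (c i)\<^sup>2 * adj E (\<sigma> i) (\<sigma> k)"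
    by (rule evo_hom_scaled_permutation[OF conn' rows_independent_adj[OF ns] hom nz]) auto
  have "c k = real (deg E i) * (c i)\<^sup>2" if "E i k" for i k
  proof -
    have ck: "c k / real (deg E i) = (c i)\<^sup>2 * adj E (\<sigma> i) (\<sigma> k)"
      using eq[of i k] that by (simp add: rw_coeffs_def adj_def)
    then have "adj E (\<sigma> i) (\<sigma> k) = 1"
      using c[of k] d[of i] by (auto simp: adj_def split: if_splits)
    with ck show ?thesis
      using d[of i] by (simp add: field_simps)
  qed
  then show ?thesis
    using simple_graph_sym[OF sg] inj_of_nat c
    by (intro neighbour_degrees_uniform_if_scaling[where g = real])
qed

lemma neighbour_degrees_uniform_if_evo_hom_adj_rw:
  assumes sg: "simple_graph E" and conn: "connected_graph E" and ns: "nonsingular_graph E"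
    and hom: "evo_hom (adj E) (rw_coeffs E) f" and nz: "f \<noteq> (\<lambda>_. 0)"
  shows "neighbour_degrees_uniform E"
proof -
  have conn': "connected_graph (\<lambda>i k. adj E i k \<noteq> 0)"
    using conn by (rule connected_graph_mono) (simp add: adj_def)
  obtain \<sigma> c where bij: "bij \<sigma>" and c: "\<And>i. c i \<noteq> 0"
    and eq: "\<And>i k. adj E i k * c k = (c i)\<^sup>2 * rw_coeffs E (\<sigma> i) (\<sigma> k)"
    by (rule evo_hom_scaled_permutation[OF conn' rows_independent_rw_coeffs[OF ns] hom nz]) auto
  have "E (\<sigma> i) (\<sigma> k) \<and> c k = (c i)\<^sup>2 / real (deg E (\<sigma> i))" if "E i k" for i k
  proof -
    have ck: "c k = (c i)\<^sup>2 * (adj E (\<sigma> i) (\<sigma> k) / real (deg E (\<sigma> i)))"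
      using eq[of i k] that by (simp add: rw_coeffs_def adj_def)
    then have "E (\<sigma> i) (\<sigma> k)"
      using c[of k] by (auto simp: adj_def split: if_splits)
    with ck show ?thesis
      by (simp add: adj_def)
  qed
  then have "c k = inverse (real (deg E i)) * (c i)\<^sup>2" if "E i k" for i k
    using deg_eq_if_bij_preserves_edges[OF bij, of E i] that by (simp add: field_simps)
  moreover have "inj (\<lambda>n. inverse (real n))"
    by (simp add: inj_def)
  ultimately show ?thesis
    using simple_graph_sym[OF sg] c by (intro neighbour_degrees_uniform_if_scaling[where g = "\<lambda>n. inverse (real n)"])
qed

theorem theorem2p3:
  fixes E :: "'v::finite \<Rightarrow> 'v \<Rightarrow> bool"
  assumes "simple_graph E" and "connected_graph E" and "nonsingular_graph E"
  shows "(evo_isomorphic (rw_coeffs E) (adj E) \<longleftrightarrow> regular_graph E \<or> biregular_graph E)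
    \<and> (\<not> evo_isomorphic (rw_coeffs E) (adj E) \<longrightarrow>
         (\<forall>f. evo_hom (rw_coeffs E) (adj E) f \<longrightarrow> f = (\<lambda>_. 0)) \<and>
         (\<forall>f. evo_hom (adj E) (rw_coeffs E) f \<longrightarrow> f = (\<lambda>_. 0)))"
proof -
  note sym = simple_graph_sym[OF assms(1)]
  have uniform_iff: "neighbour_degrees_uniform E \<longleftrightarrow> regular_graph E \<or> biregular_graph E"
    using neighbour_degrees_uniform_if_regular_or_biregular
      regular_or_biregular_if_neighbour_degrees_uniform[OF sym assms(2)] by blast
  have uniform_if_iso: "neighbour_degrees_uniform E" if iso: "evo_isomorphic (rw_coeffs E) (adj E)"
  proof -
    obtain f where hom: "evo_hom (rw_coeffs E) (adj E) f" and "bij f"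
      using iso unfolding evo_isomorphic_def by blast
    then obtain x where "f x = 1"
      by (metis bij_def surj_def)
    then have "f \<noteq> (\<lambda>_. 0)"
      by (auto simp: vec_eq_iff)
    then show ?thesis
      by (rule neighbour_degrees_uniform_if_evo_hom_rw_adj[OF assms hom])
  qed
  show ?thesis
    using uniform_iff uniform_if_iso
      evo_isomorphic_rw_adj_if_neighbour_degrees_uniform[OF sym deg_pos[OF assms(3)]]
      neighbour_degrees_uniform_if_evo_hom_rw_adj[OF assms]
      neighbour_degrees_uniform_if_evo_hom_adj_rw[OF assms] by blast
qed

end
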